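(* Let $L$ be a Lie algebra over a field $K$ of characteristic $\neq 2$. The following are equivalent: (i) for any $\varphi,\psi \in \mathrm{HomLie}(L)$, $\frac12(\varphi\circ\psi + \psi\circ\varphi) \in \mathrm{HomLie}(L)$; (ii) for any $\varphi \in \mathrm{HomLie}(L)$, $\varphi^2 \in \mathrm{HomLie}(L)$; (iii) for any $\varphi \in \mathrm{HomLie}(L)$ and any polynomial $f \in K[t]$, $f(\varphi) \in \mathrm{HomLie}(L)$; (iv) for any $\varphi,\psi \in \mathrm{HomLie}(L)$, the bilinear map $F_{\varphi,\psi}: L\times L \to L$, $F_{\varphi,\psi}(x,y) = [\varphi(x),\psi(y)] + [\psi(x),\varphi(y)]$, satisfies $[F_{\varphi,\psi}(x,y),z] + [F_{\varphi,\psi}(z,x),y] + [F_{\varphi,\psi}(y,z),x] = 0$ for all $x,y,z \in L$.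
   Context: A Hom-Lie structure on a Lie algebra $L$ is a linear map $\varphi: L \to L$ satisfying $[[x,y],\varphi(z)] + [[z,x],\varphi(y)] + [[y,z],\varphi(x)] = 0$ for all $x,y,z \in L$. $\mathrm{HomLie}(L)$ denotes the vector space of all Hom-Lie structures on $L$; $\circ$ denotes composition of maps. *)

theory Defs
  imports Main "HOL-Computational_Algebra.Polynomial"
begin

definition lie_algebra ::
  "('k::field \<Rightarrow> 'v::ab_group_add \<Rightarrow> 'v) \<Rightarrow> ('v \<Rightarrow> 'v \<Rightarrow> 'v) \<Rightarrow> bool" where
  "lie_algebra sc br \<longleftrightarrow>
     vector_space sc \<and>
     (\<forall>x. Vector_Spaces.linear sc sc (br x)) \<and>
     (\<forall>y. Vector_Spaces.linear sc sc (\<lambda>x. br x y)) \<and>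
     (\<forall>x. br x x = 0) \<and>
     (\<forall>x y z. br x (br y z) + br y (br z x) + br z (br x y) = 0)"

definition HomLie ::
  "('k::field \<Rightarrow> 'v::ab_group_add \<Rightarrow> 'v) \<Rightarrow> ('v \<Rightarrow> 'v \<Rightarrow> 'v) \<Rightarrow> ('v \<Rightarrow> 'v) set" where
  "HomLie sc br = {\<phi>. Vector_Spaces.linear sc sc \<phi> \<and>
     (\<forall>x y z. br (br x y) (\<phi> z) + br (br z x) (\<phi> y) + br (br y z) (\<phi> x) = 0)}"

definition poly_endo ::
  "('k::field \<Rightarrow> 'v::ab_group_add \<Rightarrow> 'v) \<Rightarrow> 'k poly \<Rightarrow> ('v \<Rightarrow> 'v) \<Rightarrow> ('v \<Rightarrow> 'v)" where
  "poly_endo sc f \<phi> = (\<lambda>x. \<Sum>i\<le>degree f. sc (coeff f i) ((\<phi> ^^ i) x))"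

end

theory Submission
  imports Defs
begin

text \<open>Hom-Lie structures form a linear subspace of the endomorphisms which, by the Jacobi
  identity, contains the identity. Expanding with the Jacobi identity shows that for Hom-Lie
  \<open>\<phi>, \<psi>\<close> the Hom-Lie defect of the anticommutator \<open>\<phi>\<psi> + \<psi>\<phi>\<close> is exactly the cyclic sum of
  \<open>F\<^sub>\<phi>\<^sub>,\<^sub>\<psi>\<close>; this is (i) \<open>\<Leftrightarrow>\<close> (iv). Polarization, \<open>(\<phi> + \<psi>)\<^sup>2 - \<phi>\<^sup>2 - \<psi>\<^sup>2 = \<phi>\<psi> + \<psi>\<phi>\<close> and
  \<open>2\<phi>\<^sup>2 = \<phi>\<phi> + \<phi>\<phi>\<close>, gives (i) \<open>\<Leftrightarrow>\<close> (ii); and as \<open>2\<phi>\<^bsup>n+1\<^esup> = \<phi>\<phi>\<^sup>n + \<phi>\<^sup>n\<phi>\<close>, closure under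
  anticommutators makes every power of \<open>\<phi>\<close>, hence every polynomial in \<open>\<phi>\<close>, Hom-Lie.\<close>

definition hom_lie_defect :: "('v::ab_group_add \<Rightarrow> 'v \<Rightarrow> 'v) \<Rightarrow> ('v \<Rightarrow> 'v) \<Rightarrow> 'v \<Rightarrow> 'v \<Rightarrow> 'v \<Rightarrow> 'v"
  where "hom_lie_defect br \<phi> x y z = br (br x y) (\<phi> z) + br (br z x) (\<phi> y) + br (br y z) (\<phi> x)"

text \<open>The last six defects are instances of the Jacobi identity; for Hom-Lie \<open>p, q\<close> all
  terms but the first vanish.\<close>

lemma hom_lie_defect_anticommutator:
  fixes br :: "'v::ab_group_add \<Rightarrow> 'v \<Rightarrow> 'v" and p q :: "'v \<Rightarrow> 'v"
  assumes add_left: "\<And>a b c. br (a + b) c = br a c + br b c"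
    and add_right: "\<And>a b c. br a (b + c) = br a b + br a c"
  defines "F \<equiv> \<lambda>a b. br (p a) (q b) + br (q a) (p b)"
  shows "br (F x y) z + br (F z x) y + br (F y z) x =
      hom_lie_defect br (\<lambda>v. p (q v) + q (p v)) x y z
    - (hom_lie_defect br p x y (q z) + hom_lie_defect br p x (q y) z + hom_lie_defect br p (q x) y z)
    - (hom_lie_defect br q x y (p z) + hom_lie_defect br q x (p y) z + hom_lie_defect br q (p x) y z)
    + (hom_lie_defect br id (p x) (q y) z + hom_lie_defect br id (q x) (p y) z
     + hom_lie_defect br id (p y) (q z) x + hom_lie_defect br id (q y) (p z) x
     + hom_lie_defect br id (p z) (q x) y + hom_lie_defect br id (q z) (p x) y)"
  unfolding F_def hom_lie_defect_def by (simp add: add_left add_right algebra_simps)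

locale lie_alg =
  fixes sc :: "'k::field \<Rightarrow> 'v::ab_group_add \<Rightarrow> 'v" and br :: "'v \<Rightarrow> 'v \<Rightarrow> 'v"
  assumes lie_algebra: "lie_algebra sc br"
begin

sublocale vector_space sc
  using lie_algebra unfolding lie_algebra_def by blast

sublocale endo: vector_space_pair sc sc ..

lemma bracket_linear_right: "Vector_Spaces.linear sc sc (br x)"
  using lie_algebra unfolding lie_algebra_def by blast

lemma bracket_linear_left: "Vector_Spaces.linear sc sc (\<lambda>x. br x y)"
  using lie_algebra unfolding lie_algebra_def by blast

lemma bracket_add_right: "br a (b + c) = br a b + br a c"
  using endo.linear_add[OF bracket_linear_right] .

lemma bracket_add_left: "br (a + b) c = br a c + br b c"
  using endo.linear_add[OF bracket_linear_left] .

lemma bracket_scale_right: "br a (sc k b) = sc k (br a b)"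
  using endo.linear_scale[OF bracket_linear_right] .

lemma bracket_self: "br a a = 0"
  using lie_algebra unfolding lie_algebra_def by blast

lemma jacobi: "br x (br y z) + br y (br z x) + br z (br x y) = 0"
  using lie_algebra unfolding lie_algebra_def by blast

lemma bracket_anticomm: "br b a = - br a b"
proof -
  have "br a b + br b a = br (a + b) (a + b)"
    by (simp add: bracket_add_left bracket_add_right bracket_self[of a] bracket_self[of b])
  also have "\<dots> = 0"
    by (rule bracket_self)
  finally show ?thesis
    by (simp add: eq_neg_iff_add_eq_0 add.commute)
qed

lemma hom_lie_defect_id: "hom_lie_defect br id x y z = 0"
proof -
  have "hom_lie_defect br id x y z = - (br x (br y z) + br y (br z x) + br z (br x y))"
    unfolding hom_lie_defect_def
    by (simp only: id_apply bracket_anticomm[of z "br x y"] bracket_anticomm[of y "br z x"]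
        bracket_anticomm[of x "br y z"]) (simp add: algebra_simps)
  then show ?thesis by (simp add: jacobi)
qed

lemma HomLie_iff:
  "\<phi> \<in> HomLie sc br \<longleftrightarrow>
    Vector_Spaces.linear sc sc \<phi> \<and> (\<forall>x y z. hom_lie_defect br \<phi> x y z = 0)"
  by (simp add: HomLie_def hom_lie_defect_def)

lemma HomLie_id: "id \<in> HomLie sc br"
  by (simp add: HomLie_iff hom_lie_defect_id linear_id)

lemma HomLie_add:
  assumes "\<phi> \<in> HomLie sc br" "\<psi> \<in> HomLie sc br"
  shows "(\<lambda>x. \<phi> x + \<psi> x) \<in> HomLie sc br"
proof -
  have "hom_lie_defect br (\<lambda>x. \<phi> x + \<psi> x) x y z = hom_lie_defect br \<phi> x y z + hom_lie_defect br \<psi> x y z"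
    for x y z by (simp add: hom_lie_defect_def bracket_add_right algebra_simps)
  then show ?thesis
    using assms by (simp add: HomLie_iff endo.linear_compose_add)
qed

lemma HomLie_scale:
  assumes "\<phi> \<in> HomLie sc br"
  shows "(\<lambda>x. sc c (\<phi> x)) \<in> HomLie sc br"
proof -
  have "hom_lie_defect br (\<lambda>x. sc c (\<phi> x)) x y z = sc c (hom_lie_defect br \<phi> x y z)"
    for x y z by (simp add: hom_lie_defect_def bracket_scale_right scale_right_distrib)
  then show ?thesis
    using assms by (simp add: HomLie_iff endo.linear_compose_scale_right)
qed

lemma HomLie_zero: "(\<lambda>x. 0) \<in> HomLie sc br"
  using HomLie_scale[OF HomLie_id, of 0] by simp

lemma HomLie_diff:
  assumes "\<phi> \<in> HomLie sc br" "\<psi> \<in> HomLie sc br"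
  shows "(\<lambda>x. \<phi> x - \<psi> x) \<in> HomLie sc br"
proof -
  have "hom_lie_defect br (\<lambda>x. \<phi> x - \<psi> x) x y z = hom_lie_defect br \<phi> x y z - hom_lie_defect br \<psi> x y z"
    for x y z by (simp add: hom_lie_defect_def endo.linear_diff[OF bracket_linear_right] algebra_simps)
  then show ?thesis
    using assms by (simp add: HomLie_iff endo.linear_compose_sub)
qed

lemma HomLie_sum:
  assumes "\<And>i. i \<in> I \<Longrightarrow> f i \<in> HomLie sc br"
  shows "(\<lambda>x. \<Sum>i\<in>I. f i x) \<in> HomLie sc br"
  using assms
proof (induction I rule: infinite_finite_induct)
  case (insert i I)
  then show ?case by (simp add: HomLie_add)
qed (simp_all add: HomLie_zero)

lemma HomLie_scale_iff:
  assumes "c \<noteq> 0"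
  shows "(\<lambda>x. sc c (\<phi> x)) \<in> HomLie sc br \<longleftrightarrow> \<phi> \<in> HomLie sc br"
proof
  assume "(\<lambda>x. sc c (\<phi> x)) \<in> HomLie sc br"
  then have "(\<lambda>x. sc (inverse c) (sc c (\<phi> x))) \<in> HomLie sc br"
    by (rule HomLie_scale)
  then show "\<phi> \<in> HomLie sc br"
    using assms by simp
qed (rule HomLie_scale)

lemma HomLie_double_iff:
  assumes "(2::'k) \<noteq> 0"
  shows "(\<lambda>x. \<phi> x + \<phi> x) \<in> HomLie sc br \<longleftrightarrow> \<phi> \<in> HomLie sc br"
proof -
  have "\<phi> x + \<phi> x = sc 2 (\<phi> x)" for x
    using scale_left_distrib[of 1 1 "\<phi> x"] by simp
  then show ?thesis
    using HomLie_scale_iff[OF assms] by simp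
qed

lemma HomLie_anticommutator_iff:
  assumes "\<phi> \<in> HomLie sc br" "\<psi> \<in> HomLie sc br"
  shows "(\<lambda>v. \<phi> (\<psi> v) + \<psi> (\<phi> v)) \<in> HomLie sc br \<longleftrightarrow>
    (\<forall>x y z. let F = (\<lambda>a b. br (\<phi> a) (\<psi> b) + br (\<psi> a) (\<phi> b))
      in br (F x y) z + br (F z x) y + br (F y z) x = 0)"
proof -
  have "Vector_Spaces.linear sc sc (\<phi> \<circ> \<psi>)" "Vector_Spaces.linear sc sc (\<psi> \<circ> \<phi>)"
    using assms by (auto simp: HomLie_iff intro: Vector_Spaces.linear_compose)
  then have "Vector_Spaces.linear sc sc (\<lambda>v. \<phi> (\<psi> v) + \<psi> (\<phi> v))"
    using endo.linear_compose_add by (simp add: comp_def)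
  moreover have "hom_lie_defect br (\<lambda>v. \<phi> (\<psi> v) + \<psi> (\<phi> v)) x y z =
    (let F = (\<lambda>a b. br (\<phi> a) (\<psi> b) + br (\<psi> a) (\<phi> b))
      in br (F x y) z + br (F z x) y + br (F y z) x)" for x y z
    using hom_lie_defect_anticommutator[where br = br and p = \<phi> and q = \<psi> and x = x and y = y and z = z,
        OF bracket_add_left bracket_add_right] assms
    by (simp add: HomLie_iff hom_lie_defect_id Let_def)
  ultimately show ?thesis
    by (simp add: HomLie_iff)
qed

lemma HomLie_anticommutator_if_squares:
  assumes squares: "\<And>\<chi>. \<chi> \<in> HomLie sc br \<Longrightarrow> \<chi> \<circ> \<chi> \<in> HomLie sc br"
    and \<phi>: "\<phi> \<in> HomLie sc br" and \<psi>: "\<psi> \<in> HomLie sc br"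
  shows "(\<lambda>v. \<phi> (\<psi> v) + \<psi> (\<phi> v)) \<in> HomLie sc br"
proof -
  let ?\<sigma> = "\<lambda>v. \<phi> v + \<psi> v"
  have "(\<lambda>v. (?\<sigma> \<circ> ?\<sigma>) v - (\<phi> \<circ> \<phi>) v - (\<psi> \<circ> \<psi>) v) \<in> HomLie sc br"
    by (intro HomLie_diff squares HomLie_add \<phi> \<psi>)
  moreover have "(?\<sigma> \<circ> ?\<sigma>) v - (\<phi> \<circ> \<phi>) v - (\<psi> \<circ> \<psi>) v = \<phi> (\<psi> v) + \<psi> (\<phi> v)" for v
    using \<phi> \<psi> by (simp add: HomLie_iff endo.linear_add)
  ultimately show ?thesis
    by simp
qed

lemma HomLie_anticommutator_closed_iff_square_closed:
  assumes "(2::'k) \<noteq> 0"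
  shows "(\<forall>\<phi>\<in>HomLie sc br. \<forall>\<psi>\<in>HomLie sc br. (\<lambda>v. \<phi> (\<psi> v) + \<psi> (\<phi> v)) \<in> HomLie sc br)
    \<longleftrightarrow> (\<forall>\<phi>\<in>HomLie sc br. \<phi> \<circ> \<phi> \<in> HomLie sc br)"
  using HomLie_double_iff[OF assms] HomLie_anticommutator_if_squares
  by (fastforce simp: comp_def)

lemma HomLie_funpow:
  assumes two: "(2::'k) \<noteq> 0"
    and anticomm: "\<And>\<psi> \<chi>. \<psi> \<in> HomLie sc br \<Longrightarrow> \<chi> \<in> HomLie sc br \<Longrightarrow>
      (\<lambda>v. \<psi> (\<chi> v) + \<chi> (\<psi> v)) \<in> HomLie sc br"
    and \<phi>: "\<phi> \<in> HomLie sc br"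
  shows "\<phi> ^^ n \<in> HomLie sc br"
proof (induction n)
  case 0
  show ?case using HomLie_id by (simp add: id_def)
next
  case (Suc n)
  have "(\<lambda>v. (\<phi> ^^ Suc n) v + (\<phi> ^^ Suc n) v) \<in> HomLie sc br"
    using anticomm[OF \<phi> Suc.IH] by (simp add: funpow_swap1)
  then show ?case
    by (rule HomLie_double_iff[OF two, THEN iffD1])
qed

lemma poly_endo_HomLie:
  assumes "\<And>n. \<phi> ^^ n \<in> HomLie sc br"
  shows "poly_endo sc f \<phi> \<in> HomLie sc br"
  unfolding poly_endo_def by (intro HomLie_sum HomLie_scale assms)

lemma poly_endo_monom_one: "poly_endo sc (monom 1 n) \<phi> = \<phi> ^^ n"
proof
  fix x
  have "sc (coeff (monom 1 n) i) ((\<phi> ^^ i) x) = (if i = n then (\<phi> ^^ i) x else 0)" for i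
    by (simp add: coeff_monom)
  then show "poly_endo sc (monom 1 n) \<phi> x = (\<phi> ^^ n) x"
    by (simp add: poly_endo_def degree_monom_eq)
qed

lemma HomLie_poly_closed_iff_square_closed:
  assumes two: "(2::'k) \<noteq> 0"
  shows "(\<forall>\<phi>\<in>HomLie sc br. \<phi> \<circ> \<phi> \<in> HomLie sc br)
    \<longleftrightarrow> (\<forall>\<phi>\<in>HomLie sc br. \<forall>f. poly_endo sc f \<phi> \<in> HomLie sc br)"
proof
  assume "\<forall>\<phi>\<in>HomLie sc br. \<phi> \<circ> \<phi> \<in> HomLie sc br"
  then have "\<forall>\<phi>\<in>HomLie sc br. \<forall>\<psi>\<in>HomLie sc br. (\<lambda>v. \<phi> (\<psi> v) + \<psi> (\<phi> v)) \<in> HomLie sc br"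
    using HomLie_anticommutator_closed_iff_square_closed[OF two] by blast
  then show "\<forall>\<phi>\<in>HomLie sc br. \<forall>f. poly_endo sc f \<phi> \<in> HomLie sc br"
    by (intro ballI allI poly_endo_HomLie HomLie_funpow[OF two]) auto
next
  assume "\<forall>\<phi>\<in>HomLie sc br. \<forall>f. poly_endo sc f \<phi> \<in> HomLie sc br"
  then have "\<forall>\<phi>\<in>HomLie sc br. poly_endo sc (monom 1 2) \<phi> \<in> HomLie sc br"
    by blast
  then show "\<forall>\<phi>\<in>HomLie sc br. \<phi> \<circ> \<phi> \<in> HomLie sc br"
    by (simp add: poly_endo_monom_one numeral_2_eq_2)
qed

end

theorem lemma1p2:
  fixes sc :: "'k::field \<Rightarrow> 'v::ab_group_add \<Rightarrow> 'v"
    and br :: "'v \<Rightarrow> 'v \<Rightarrow> 'v"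
  assumes L: "lie_algebra sc br"
    and char: "(2::'k) \<noteq> 0"
  shows
    "((\<forall>\<phi>\<in>HomLie sc br. \<forall>\<psi>\<in>HomLie sc br.
         (\<lambda>x. sc (1/2) ((\<phi> \<circ> \<psi>) x + (\<psi> \<circ> \<phi>) x)) \<in> HomLie sc br)
      \<longleftrightarrow> (\<forall>\<phi>\<in>HomLie sc br. \<phi> \<circ> \<phi> \<in> HomLie sc br))
   \<and> ((\<forall>\<phi>\<in>HomLie sc br. \<phi> \<circ> \<phi> \<in> HomLie sc br)
      \<longleftrightarrow> (\<forall>\<phi>\<in>HomLie sc br. \<forall>f :: 'k poly. poly_endo sc f \<phi> \<in> HomLie sc br))
   \<and> ((\<forall>\<phi>\<in>HomLie sc br. \<forall>f :: 'k poly. poly_endo sc f \<phi> \<in> HomLie sc br)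
      \<longleftrightarrow> (\<forall>\<phi>\<in>HomLie sc br. \<forall>\<psi>\<in>HomLie sc br. \<forall>x y z.
            (let F = (\<lambda>a b. br (\<phi> a) (\<psi> b) + br (\<psi> a) (\<phi> b))
             in br (F x y) z + br (F z x) y + br (F y z) x = 0)))"
proof -
  interpret lie_alg sc br
    using L by (rule lie_alg.intro)
  let ?H = "HomLie sc br"
  let ?anticomm = "\<forall>\<phi>\<in>?H. \<forall>\<psi>\<in>?H. (\<lambda>v. \<phi> (\<psi> v) + \<psi> (\<phi> v)) \<in> ?H"
  have half: "(\<forall>\<phi>\<in>?H. \<forall>\<psi>\<in>?H. (\<lambda>x. sc (1/2) ((\<phi> \<circ> \<psi>) x + (\<psi> \<circ> \<phi>) x)) \<in> ?H) \<longleftrightarrow> ?anticomm"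
    using HomLie_scale_iff[of "1/2"] char by simp
  have squares: "?anticomm \<longleftrightarrow> (\<forall>\<phi>\<in>?H. \<phi> \<circ> \<phi> \<in> ?H)"
    using HomLie_anticommutator_closed_iff_square_closed[OF char] .
  have polys: "(\<forall>\<phi>\<in>?H. \<phi> \<circ> \<phi> \<in> ?H) \<longleftrightarrow> (\<forall>\<phi>\<in>?H. \<forall>f :: 'k poly. poly_endo sc f \<phi> \<in> ?H)"
    using HomLie_poly_closed_iff_square_closed[OF char] .
  have cyclic: "?anticomm \<longleftrightarrow> (\<forall>\<phi>\<in>?H. \<forall>\<psi>\<in>?H. \<forall>x y z.
            (let F = (\<lambda>a b. br (\<phi> a) (\<psi> b) + br (\<psi> a) (\<phi> b))
             in br (F x y) z + br (F z x) y + br (F y z) x = 0))"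
    using HomLie_anticommutator_iff by (intro ball_cong) auto
  show ?thesis
    using half squares polys cyclic by argo
qed

end
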